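(* Suppose $\mathcal U$ is strongly stable with parameters $b>0$, $q\ge1$ (and $a>0$). Then $\mathcal U$ is $L$-Lipschitz on $\mathcal D^\Delta$, i.e. $|\mathcal U(F_1)-\mathcal U(F_2)|\le L\|F_1-F_2\|$ for all $F_1,F_2\in\mathcal D^\Delta$, with $L=b\bigl(1+\max_{i,j\in\mathbb K}\|F^{(i)}-F^{(j)}\|^{q-1}\bigr)$.
   Context: Let $K\ge1$, $\mathbb K=\{1,\dots,K\}$, and let $F^{(1)},\dots,F^{(K)}$ be distribution functions on $\mathbb R$ (the reward distributions of $K$ arms; arm $i$ produces i.i.d. rewards $X^{(i)}_1,X^{(i)}_2,\dots$ with distribution $F^{(i)}$). Let $\hat F^{(i)}_t(y)=\frac1t\sum_{s=1}^t\mathbf 1\{X^{(i)}_s\le y\}$, and let $\hat{\mathcal D}$ be the set of empirical distribution functions $y\mapsto\frac1t\sum_{s\le t}\mathbf 1\{x_s\le y\}$ of all finite real sequences $x_1,\dots,x_t$, $t\ge1$. $\Delta_{K-1}$ is the probability simplex, $F_p=\sum_ip_iF^{(i)}$, $\mathcal D^\Delta=\{F_p:p\in\Delta_{K-1}\}$. $(L,\|\cdot\|)$ is a Banach space of bounded functions on $\mathbb R$ containing $\mathcal D^\Delta\cup\hat{\mathcal D}$, and $\mathcal U:L\to\mathbb R$. $\mathcal U$ is strongly stable if (1) there exist $b>0,q\ge1$ with $|\mathcal U(F)-\mathcal U(G)|\le b(\|F-G\|+\|F-G\|^q)$ for all $F\in\mathcal D^\Delta$, $G\in\mathcal D^\Delta\cup\hat{\mathcal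 D}$, and (2) there is $a>0$ with $\mathbb P(\|\hat F^{(i)}_t-F^{(i)}\|\ge x)\le2\exp(-atx^2)$ for all $i$, $x>0$, $t\ge1$. *)

theory Defs
  imports "HOL-Analysis.Analysis" "HOL-Probability.Probability"
begin

definition dist_fun :: "(real \<Rightarrow> real) \<Rightarrow> bool" where
  "dist_fun F \<longleftrightarrow> mono F \<and> (\<forall>x. continuous (at_right x) F)
     \<and> (F \<longlongrightarrow> 0) at_bot \<and> (F \<longlongrightarrow> 1) at_top"

definition prob_simplex :: "nat \<Rightarrow> (nat \<Rightarrow> real) set" where
  "prob_simplex K = {p. (\<forall>i\<in>{1..K}. 0 \<le> p i) \<and> (\<Sum>i=1..K. p i) = 1}"

definition mixture :: "nat \<Rightarrow> (nat \<Rightarrow> real \<Rightarrow> real) \<Rightarrow> (nat \<Rightarrow> real) \<Rightarrow> real \<Rightarrow> real" where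
  "mixture K F p = (\<lambda>y. \<Sum>i=1..K. p i * F i y)"

definition mixtures :: "nat \<Rightarrow> (nat \<Rightarrow> real \<Rightarrow> real) \<Rightarrow> (real \<Rightarrow> real) set" where
  "mixtures K F = mixture K F ` prob_simplex K"

definition emp_df :: "(nat \<Rightarrow> real) \<Rightarrow> nat \<Rightarrow> real \<Rightarrow> real" where
  "emp_df x t = (\<lambda>y. (1 / real t) * (\<Sum>s=1..t. if x s \<le> y then 1 else 0))"

definition emp_dfs :: "(real \<Rightarrow> real) set" where
  "emp_dfs = {emp_df x t | x t. t \<ge> 1}"

definition banach_fun_space :: "(real \<Rightarrow> real) set \<Rightarrow> ((real \<Rightarrow> real) \<Rightarrow> real) \<Rightarrow> bool" where
  "banach_fun_space L nrm \<longleftrightarrow>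
     (\<forall>f\<in>L. \<exists>B. \<forall>y. \<bar>f y\<bar> \<le> B) \<and>
     (\<lambda>_. 0) \<in> L \<and>
     (\<forall>f\<in>L. \<forall>g\<in>L. (\<lambda>y. f y + g y) \<in> L) \<and>
     (\<forall>f\<in>L. \<forall>c::real. (\<lambda>y. c * f y) \<in> L) \<and>
     (\<forall>f\<in>L. 0 \<le> nrm f \<and> (nrm f = 0 \<longleftrightarrow> f = (\<lambda>_. 0))) \<and>
     (\<forall>f\<in>L. \<forall>g\<in>L. nrm (\<lambda>y. f y + g y) \<le> nrm f + nrm g) \<and>
     (\<forall>f\<in>L. \<forall>c::real. nrm (\<lambda>y. c * f y) = \<bar>c\<bar> * nrm f) \<and>
     (\<forall>u::nat \<Rightarrow> real \<Rightarrow> real. (\<forall>n. u n \<in> L) \<longrightarrow>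
        (\<forall>e>0. \<exists>N. \<forall>m\<ge>N. \<forall>n\<ge>N. nrm (\<lambda>y. u m y - u n y) < e) \<longrightarrow>
        (\<exists>f\<in>L. (\<lambda>n. nrm (\<lambda>y. u n y - f y)) \<longlonglongrightarrow> 0))"

text \<open>Real power with the convention 0^0 = 1.\<close>
definition rpow :: "real \<Rightarrow> real \<Rightarrow> real" where
  "rpow x e = (if e = 0 then 1 else x powr e)"

end

theory Submission
  imports Defs
begin

text \<open>Any two mixtures are within distance \<open>D = max\<^sub>i\<^sub>j \<parallel>F\<^sub>i - F\<^sub>j\<parallel>\<close> of each other, because
  \<open>F\<^sub>p - F\<^sub>r = \<Sum>\<^sub>i\<^sub>j p\<^sub>i r\<^sub>j (F\<^sub>i - F\<^sub>j)\<close> is a convex combination of such differences. Hence for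
  \<open>d = \<parallel>F1 - F2\<parallel>\<close> the superlinear term of the stability bound satisfies
  \<open>d powr q = d powr (q - 1) * d \<le> D powr (q - 1) * d\<close>, which turns \<open>b (d + d powr q)\<close> into a
  Lipschitz bound.\<close>

lemma
  assumes "banach_fun_space L nrm"
  shows banach_fun_space_add_mem: "f \<in> L \<Longrightarrow> g \<in> L \<Longrightarrow> (\<lambda>y. f y + g y) \<in> L"
    and banach_fun_space_scale_mem: "f \<in> L \<Longrightarrow> (\<lambda>y. c * f y) \<in> L"
    and banach_fun_space_norm_nonneg: "f \<in> L \<Longrightarrow> 0 \<le> nrm f"
    and banach_fun_space_norm_triangle:
      "f \<in> L \<Longrightarrow> g \<in> L \<Longrightarrow> nrm (\<lambda>y. f y + g y) \<le> nrm f + nrm g"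
    and banach_fun_space_norm_scale: "f \<in> L \<Longrightarrow> nrm (\<lambda>y. c * f y) = \<bar>c\<bar> * nrm f"
  using assms unfolding banach_fun_space_def by blast+

lemma banach_fun_space_diff_mem:
  assumes L: "banach_fun_space L nrm" and "f \<in> L" "g \<in> L"
  shows "(\<lambda>y. f y - g y) \<in> L"
  using banach_fun_space_add_mem[OF L \<open>f \<in> L\<close> banach_fun_space_scale_mem[OF L \<open>g \<in> L\<close>, of "-1"]]
  by simp

lemma banach_fun_space_sum_mem:
  assumes L: "banach_fun_space L nrm" and "finite S" and "\<forall>k\<in>S. g k \<in> L"
  shows "(\<lambda>y. \<Sum>k\<in>S. g k y) \<in> L"
  using assms(2,3)
proof (induction S rule: finite_induct)
  case empty
  then show ?case using L unfolding banach_fun_space_def by simp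
next
  case (insert x S)
  then show ?case using banach_fun_space_add_mem[OF L, of "g x" "\<lambda>y. \<Sum>k\<in>S. g k y"] by simp
qed

lemma banach_fun_space_norm_sum_le:
  assumes L: "banach_fun_space L nrm" and "finite S" and "\<forall>k\<in>S. g k \<in> L"
  shows "nrm (\<lambda>y. \<Sum>k\<in>S. g k y) \<le> (\<Sum>k\<in>S. nrm (g k))"
  using assms(2,3)
proof (induction S rule: finite_induct)
  case empty
  then show ?case using L unfolding banach_fun_space_def by auto
next
  case (insert x S)
  then have "nrm (\<lambda>y. g x y + (\<Sum>k\<in>S. g k y)) \<le> nrm (g x) + nrm (\<lambda>y. \<Sum>k\<in>S. g k y)"
    using banach_fun_space_norm_triangle[OF L] banach_fun_space_sum_mem[OF L insert.hyps(1)]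
    by simp
  with insert show ?case by simp
qed

lemma banach_fun_space_norm_convex_comb_le:
  assumes L: "banach_fun_space L nrm" and S: "finite S" and g: "\<forall>k\<in>S. g k \<in> L"
    and w: "\<forall>k\<in>S. 0 \<le> w k" "sum w S = 1" and D: "\<forall>k\<in>S. nrm (g k) \<le> D"
  shows "nrm (\<lambda>y. \<Sum>k\<in>S. w k * g k y) \<le> D"
proof -
  have "nrm (\<lambda>y. \<Sum>k\<in>S. w k * g k y) \<le> (\<Sum>k\<in>S. nrm (\<lambda>y. w k * g k y))"
    using banach_fun_space_norm_sum_le[OF L S] g banach_fun_space_scale_mem[OF L] by simp
  also have "\<dots> = (\<Sum>k\<in>S. w k * nrm (g k))"
    using g w by (intro sum.cong) (simp_all add: banach_fun_space_norm_scale[OF L])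
  also have "\<dots> \<le> (\<Sum>k\<in>S. w k * D)"
    using w D by (intro sum_mono mult_left_mono) auto
  also have "\<dots> = D"
    using w by (simp add: sum_distrib_right[symmetric])
  finally show ?thesis .
qed

lemma mixture_unit_vector:
  assumes "i \<in> {1..K}"
  shows "mixture K F (\<lambda>k. if k = i then 1 else 0) = F i"
proof
  fix y
  have "(\<Sum>k=1..K. (if k = i then 1 else 0) * F k y) = (\<Sum>k=1..K. if k = i then F k y else 0)"
    by (rule sum.cong) auto
  then show "mixture K F (\<lambda>k. if k = i then 1 else 0) y = F i y"
    using assms by (simp add: mixture_def)
qed

lemma component_mem_mixtures:
  assumes "i \<in> {1..K}"
  shows "F i \<in> mixtures K F"
proof -
  have "(\<lambda>k. if k = i then 1 else 0) \<in> prob_simplex K"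
    using assms unfolding prob_simplex_def by (auto simp: sum.delta)
  then show ?thesis
    unfolding mixtures_def using mixture_unit_vector[OF assms] by (metis image_eqI)
qed

lemma mixture_diff_eq_sum_pairs:
  assumes p: "p \<in> prob_simplex K" and r: "r \<in> prob_simplex K"
  shows "mixture K F p y - mixture K F r y
    = (\<Sum>k\<in>{1..K} \<times> {1..K}. p (fst k) * r (snd k) * (F (fst k) y - F (snd k) y))"
proof -
  have p1: "(\<Sum>i=1..K. p i) = 1" and r1: "(\<Sum>j=1..K. r j) = 1"
    using p r unfolding prob_simplex_def by auto
  have "(\<Sum>k\<in>{1..K} \<times> {1..K}. p (fst k) * r (snd k) * (F (fst k) y - F (snd k) y))
      = (\<Sum>i=1..K. \<Sum>j=1..K. p i * r j * (F i y - F j y))"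
    by (simp add: sum.cartesian_product case_prod_beta)
  also have "\<dots> = (\<Sum>i=1..K. \<Sum>j=1..K. p i * F i y * r j) - (\<Sum>i=1..K. \<Sum>j=1..K. p i * (r j * F j y))"
    by (simp add: sum_subtractf algebra_simps)
  also have "\<dots> = (\<Sum>i=1..K. p i * F i y) * (\<Sum>j=1..K. r j) - (\<Sum>i=1..K. p i) * (\<Sum>j=1..K. r j * F j y)"
    by (simp only: sum_product)
  finally show ?thesis
    unfolding mixture_def p1 r1 by simp
qed

lemma norm_mixture_diff_le_component_diff:
  assumes L: "banach_fun_space L nrm" and LD: "mixtures K F \<subseteq> L"
    and p: "p \<in> prob_simplex K" and r: "r \<in> prob_simplex K"
  shows "\<exists>i\<in>{1..K}. \<exists>j\<in>{1..K}.
    nrm (\<lambda>y. mixture K F p y - mixture K F r y) \<le> nrm (\<lambda>y. F i y - F j y)"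
proof -
  define P where "P = {1..K} \<times> {1..K}"
  define nf where "nf k = nrm (\<lambda>y. F (fst k) y - F (snd k) y)" for k
  have "K \<noteq> 0"
  proof
    assume "K = 0"
    with p show False by (simp add: prob_simplex_def)
  qed
  then have "finite P" "P \<noteq> {}"
    unfolding P_def by auto
  then obtain k0 where k0: "k0 \<in> P" "\<forall>k\<in>P. nf k \<le> nf k0"
    using Max_in[of "nf ` P"] Max_ge[of "nf ` P"] by fastforce
  have F_mem: "F i \<in> L" if "i \<in> {1..K}" for i
    using component_mem_mixtures[OF that] LD by blast
  have diff_mem: "\<forall>k\<in>P. (\<lambda>y. F (fst k) y - F (snd k) y) \<in> L"
    unfolding P_def by (auto intro!: banach_fun_space_diff_mem[OF L F_mem F_mem])
  have weights_nonneg: "\<forall>k\<in>P. 0 \<le> p (fst k) * r (snd k)"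
    using p r unfolding P_def prob_simplex_def by auto
  have "(\<Sum>k\<in>P. p (fst k) * r (snd k)) = (\<Sum>i=1..K. p i) * (\<Sum>j=1..K. r j)"
    unfolding P_def by (simp add: sum_product sum.cartesian_product case_prod_beta)
  then have weights_sum: "(\<Sum>k\<in>P. p (fst k) * r (snd k)) = 1"
    using p r unfolding prob_simplex_def by simp
  have "\<forall>k\<in>P. nrm (\<lambda>y. F (fst k) y - F (snd k) y) \<le> nf k0"
    using k0(2) unfolding nf_def .
  from banach_fun_space_norm_convex_comb_le[OF L \<open>finite P\<close> diff_mem weights_nonneg weights_sum this]
  have "nrm (\<lambda>y. \<Sum>k\<in>P. p (fst k) * r (snd k) * (F (fst k) y - F (snd k) y)) \<le> nf k0" .
  then have "nrm (\<lambda>y. mixture K F p y - mixture K F r y) \<le> nf k0"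
    unfolding P_def by (simp only: mixture_diff_eq_sum_pairs[OF p r])
  moreover have "fst k0 \<in> {1..K}" "snd k0 \<in> {1..K}"
    using k0(1) unfolding P_def by auto
  ultimately show ?thesis
    unfolding nf_def by blast
qed

lemma powr_le_rpow_pred_mult:
  fixes d D q :: real
  assumes "0 \<le> d" "d \<le> D" "1 \<le> q"
  shows "d powr q \<le> rpow D (q - 1) * d"
proof (cases "q = 1 \<or> d = 0")
  case True
  then show ?thesis using assms(1) by (auto simp: rpow_def)
next
  case False
  then have "d powr q = d powr (q - 1) * d"
    using assms(1) powr_add[of d "q - 1" 1] by simp
  also have "\<dots> \<le> D powr (q - 1) * d"
    using assms by (intro mult_right_mono powr_mono2) auto
  finally show ?thesis
    using False by (simp add: rpow_def)
qed

theorem lemma15: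
  fixes K :: nat
    and F :: "nat \<Rightarrow> real \<Rightarrow> real"
    and L :: "(real \<Rightarrow> real) set"
    and nrm :: "(real \<Rightarrow> real) \<Rightarrow> real"
    and U :: "(real \<Rightarrow> real) \<Rightarrow> real"
    and M :: "'w measure"
    and X :: "nat \<Rightarrow> nat \<Rightarrow> 'w \<Rightarrow> real"
    and a b q :: real
  assumes K: "K \<ge> 1"
    and Fdf: "\<forall>i\<in>{1..K}. dist_fun (F i)"
    and M: "prob_space M"
    and Xrv: "\<forall>i\<in>{1..K}. \<forall>s\<ge>1. X i s \<in> borel_measurable M"
    and Xind: "\<forall>i\<in>{1..K}. prob_space.indep_vars M (\<lambda>_. borel) (X i) {1..}"
    and Xdist: "\<forall>i\<in>{1..K}. \<forall>s\<ge>1. cdf (distr M borel (X i s)) = F i"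
    and L: "banach_fun_space L nrm"
    and LD: "mixtures K F \<union> emp_dfs \<subseteq> L"
    and b: "b > 0" and q: "q \<ge> 1" and a: "a > 0"
    and stab1: "\<forall>F1\<in>mixtures K F. \<forall>G\<in>mixtures K F \<union> emp_dfs.
        \<bar>U F1 - U G\<bar> \<le> b * (nrm (\<lambda>y. F1 y - G y) + nrm (\<lambda>y. F1 y - G y) powr q)"
    and stab2: "\<forall>i\<in>{1..K}. \<forall>x>0. \<forall>t\<ge>1.
        measure M {\<omega> \<in> space M. nrm (\<lambda>y. emp_df (\<lambda>s. X i s \<omega>) t y - F i y) \<ge> x}
          \<le> 2 * exp (- a * real t * x\<^sup>2)"
  shows "\<forall>F1\<in>mixtures K F. \<forall>F2\<in>mixtures K F.
           \<bar>U F1 - U F2\<bar> \<le>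
             b * (1 + Max {rpow (nrm (\<lambda>y. F i y - F j y)) (q - 1) | i j. i \<in> {1..K} \<and> j \<in> {1..K}})
             * nrm (\<lambda>y. F1 y - F2 y)"
proof (intro ballI)
  fix F1 F2 assume F1: "F1 \<in> mixtures K F" and F2: "F2 \<in> mixtures K F"
  define S where "S = {rpow (nrm (\<lambda>y. F i y - F j y)) (q - 1) | i j. i \<in> {1..K} \<and> j \<in> {1..K}}"
  define d where "d = nrm (\<lambda>y. F1 y - F2 y)"
  have "finite S"
    unfolding S_def by (rule finite_image_set2) simp_all
  obtain p r where "p \<in> prob_simplex K" "r \<in> prob_simplex K"
    and "F1 = mixture K F p" "F2 = mixture K F r"
    using F1 F2 unfolding mixtures_def by blast
  then obtain i j where ij: "i \<in> {1..K}" "j \<in> {1..K}" "d \<le> nrm (\<lambda>y. F i y - F j y)"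
    using norm_mixture_diff_le_component_diff[OF L] LD unfolding d_def by blast
  have "0 \<le> d"
    using F1 F2 LD banach_fun_space_diff_mem[OF L] banach_fun_space_norm_nonneg[OF L]
    unfolding d_def by blast
  have "d powr q \<le> rpow (nrm (\<lambda>y. F i y - F j y)) (q - 1) * d"
    using powr_le_rpow_pred_mult[OF \<open>0 \<le> d\<close> ij(3) q] .
  also have "\<dots> \<le> Max S * d"
    using \<open>finite S\<close> ij(1,2) \<open>0 \<le> d\<close> unfolding S_def by (intro mult_right_mono Max_ge) auto
  finally have "b * (d + d powr q) \<le> b * (1 + Max S) * d"
    using b by (simp add: algebra_simps)
  moreover have "\<bar>U F1 - U F2\<bar> \<le> b * (d + d powr q)"
    using stab1 F1 F2 unfolding d_def by blast
  ultimately show "\<bar>U F1 - U F2\<bar> \<le> b * (1 + Max S) * d"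
    by linarith
qed

end
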